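(* (i) Let $(\bar x,\bar r)\in\mathbb{R}^n\times\mathbb{R}^2_+$ be a global optimal solution of problem (P2) and suppose $(\bar x,\bar\xi)\in\mathcal{M}(\bar r)$. Then $(\bar x,\bar\lambda)$ with $\bar\lambda:=\bar\xi$ is a global optimal solution of problem (P1). (ii) Suppose there exists a dense subset $\mathbb{D}\subset\mathbb{R}^n\times\mathbb{R}^2_+$ such that $\mathcal{M}(r)\neq\varnothing$ for all $(x,r)\in\mathbb{D}$. Let $(\bar x,\bar\lambda)$ be a global optimal solution of problem (P1) and let $\bar r:=\mathbb{Q}(\bar x)$. Then $(\bar x,\bar r)$ is a global optimal solution of problem (P2).
   Context: Fix $\Psi\in\mathbb{R}^{d\times n}$, linear difference operators $D_1,\dots,D_n$ (matrices with $n$ columns), and $\|x\|_{\mathrm{TV}}:=\sum_{i=1}^n\|D_ix\|_1$. Training data $\Phi_{\mathrm{tr}}\in\mathbb{R}^{m_1\times n}$, $b_{\mathrm{tr}}\in\mathbb{R}^{m_1}$ and validation data $\Phi_{\mathrm{val}}\in\mathbb{R}^{m_2\times n}$, $b_{\mathrm{val}}\in\mathbb{R}^{m_2}$ are given. Let $F(x):=\frac12\|\Phi_{\mathrm{val}}x-b_{\mathrm{val}}\|_2^2$. For $\lambda\in\mathbb{R}^2_+$, $\mathbb{S}_p(\lambda)$ is the set of minimizers over $x\in\mathbb{R}^n$ of $\frac12\|\Phi_{\mathrm{tr}}x-b_{\mathrm{tr}}\|_2^2+\lambda_1\|\Psi x\|_1+\lambda_2\|x\|_{\mathrm{TV}}$;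 for $r\in\mathbb{R}^2_+$, $\mathbb{S}_c(r)$ is the set of minimizers over $x\in\mathbb{R}^n$ of $\frac12\|\Phi_{\mathrm{tr}}x-b_{\mathrm{tr}}\|_2^2$ subject to $\|\Psi x\|_1\le r_1$, $\|x\|_{\mathrm{TV}}\le r_2$. Problem (P1): minimize $F(x)$ over $(x,\lambda)\in\mathbb{R}^n\times\mathbb{R}^2_+$ subject to $x\in\mathbb{S}_p(\lambda)$. Problem (P2): minimize $F(x)$ over $(x,r)\in\mathbb{R}^n\times\mathbb{R}^2_+$ subject to $x\in\mathbb{S}_c(r)$. A global optimal solution is a feasible point whose objective value is $\le$ that of every feasible point. $\mathbb{Q}(x):=(\|\Psi x\|_1,\|x\|_{\mathrm{TV}})\in\mathbb{R}^2_+$. For $r\in\mathbb{R}^2_+$, $\mathcal{M}(r):=\{(x,\xi)\in\mathbb{R}^n\times\mathbb{R}^2_+ : 0\in\Phi_{\mathrm{tr}}^\top(\Phi_{\mathrm{tr}}x-b_{\mathrm{tr}})+\xi_1\Psi^\top\partial\|\cdot\|_1(\Psi x)+\xi_2\sum_{i=1}^n D_i^\top\partial\|\cdot\|_1(D_ix),\ \xi_1(\|\Psi x\|_1-r_1)=0,\ \xi_2(\|x\|_{\mathrm{TV}}-r_2)=0\}$, where $\partial$ is the convex subdifferential. *)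

theory Defs
  imports "HOL-Analysis.Analysis"
begin

definition l1norm :: "real^'k \<Rightarrow> real" where
  "l1norm v = (\<Sum>j\<in>UNIV. \<bar>v $ j\<bar>)"

definition subdiff :: "(real^'k \<Rightarrow> real) \<Rightarrow> real^'k \<Rightarrow> (real^'k) set" where
  "subdiff f y = {g. \<forall>z. f z \<ge> f y + g \<bullet> (z - y)}"

definition TVnorm :: "('n \<Rightarrow> real^'n^'k) \<Rightarrow> real^'n \<Rightarrow> real" where
  "TVnorm D x = (\<Sum>i\<in>UNIV. l1norm (D i *v x))"

definition R2plus :: "(real \<times> real) set" where
  "R2plus = {p. fst p \<ge> 0 \<and> snd p \<ge> 0}"

definition lossTr :: "real^'n^'m \<Rightarrow> real^'m \<Rightarrow> real^'n \<Rightarrow> real" where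
  "lossTr Phi b x = (1/2) * (norm (Phi *v x - b))\<^sup>2"

definition Fval :: "real^'n^'m \<Rightarrow> real^'m \<Rightarrow> real^'n \<Rightarrow> real" where
  "Fval Phi b x = (1/2) * (norm (Phi *v x - b))\<^sup>2"

definition Sp :: "real^'n^'d \<Rightarrow> ('n \<Rightarrow> real^'n^'k) \<Rightarrow> real^'n^'m \<Rightarrow> real^'m
                  \<Rightarrow> real \<times> real \<Rightarrow> (real^'n) set" where
  "Sp Psi D Phi b lam =
     {x. \<forall>y. lossTr Phi b x + fst lam * l1norm (Psi *v x) + snd lam * TVnorm D x
            \<le> lossTr Phi b y + fst lam * l1norm (Psi *v y) + snd lam * TVnorm D y}"

definition Sc :: "real^'n^'d \<Rightarrow> ('n \<Rightarrow> real^'n^'k) \<Rightarrow> real^'n^'m \<Rightarrow> real^'m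
                  \<Rightarrow> real \<times> real \<Rightarrow> (real^'n) set" where
  "Sc Psi D Phi b r =
     {x. l1norm (Psi *v x) \<le> fst r \<and> TVnorm D x \<le> snd r \<and>
         (\<forall>y. l1norm (Psi *v y) \<le> fst r \<and> TVnorm D y \<le> snd r
              \<longrightarrow> lossTr Phi b x \<le> lossTr Phi b y)}"

definition globalOptP1 ::
  "real^'n^'d \<Rightarrow> ('n \<Rightarrow> real^'n^'k) \<Rightarrow> real^'n^'m1 \<Rightarrow> real^'m1 \<Rightarrow> real^'n^'m2 \<Rightarrow> real^'m2
   \<Rightarrow> real^'n \<Rightarrow> real \<times> real \<Rightarrow> bool" where
  "globalOptP1 Psi D Phitr btr Phival bval x lam \<longleftrightarrow>
     lam \<in> R2plus \<and> x \<in> Sp Psi D Phitr btr lam \<and>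
     (\<forall>x' lam'. lam' \<in> R2plus \<and> x' \<in> Sp Psi D Phitr btr lam'
        \<longrightarrow> Fval Phival bval x \<le> Fval Phival bval x')"

definition globalOptP2 ::
  "real^'n^'d \<Rightarrow> ('n \<Rightarrow> real^'n^'k) \<Rightarrow> real^'n^'m1 \<Rightarrow> real^'m1 \<Rightarrow> real^'n^'m2 \<Rightarrow> real^'m2
   \<Rightarrow> real^'n \<Rightarrow> real \<times> real \<Rightarrow> bool" where
  "globalOptP2 Psi D Phitr btr Phival bval x r \<longleftrightarrow>
     r \<in> R2plus \<and> x \<in> Sc Psi D Phitr btr r \<and>
     (\<forall>x' r'. r' \<in> R2plus \<and> x' \<in> Sc Psi D Phitr btr r'
        \<longrightarrow> Fval Phival bval x \<le> Fval Phival bval x')"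

definition Qmap :: "real^'n^'d \<Rightarrow> ('n \<Rightarrow> real^'n^'k) \<Rightarrow> real^'n \<Rightarrow> real \<times> real" where
  "Qmap Psi D x = (l1norm (Psi *v x), TVnorm D x)"

text \<open>The KKT-type set M(r); set sums of subdifferentials are expressed via selections.\<close>
definition Mset :: "real^'n^'d \<Rightarrow> ('n \<Rightarrow> real^'n^'k) \<Rightarrow> real^'n^'m \<Rightarrow> real^'m
                  \<Rightarrow> real \<times> real \<Rightarrow> ((real^'n) \<times> (real \<times> real)) set" where
  "Mset Psi D Phi b r =
     {(x, xi). xi \<in> R2plus \<and>
        (\<exists>g1 g2. g1 \<in> subdiff l1norm (Psi *v x) \<and>
                 (\<forall>i. g2 i \<in> subdiff l1norm (D i *v x)) \<and>
                 0 = transpose Phi *v (Phi *v x - b) + fst xi *\<^sub>R (transpose Psi *v g1)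
                     + snd xi *\<^sub>R (\<Sum>i\<in>UNIV. transpose (D i) *v g2 i)) \<and>
        fst xi * (l1norm (Psi *v x) - fst r) = 0 \<and>
        snd xi * (TVnorm D x - snd r) = 0}"

end

theory Submission
  imports Defs
begin

text \<open>
  (P1) and (P2) share the objective F, so both parts compare their feasible sets.
  If x minimises the penalised loss for weights \<lambda> \<ge> 0, it minimises the loss under the constraints
  r = Q(x); and for (x, \<xi>) \<in> M(r) the stationarity condition says that 0 is a subgradient of the
  penalised objective with weights \<xi>, so x is (P1)-feasible.  Conversely every (P2)-feasible
  point is (P1)-feasible: the l1 and TV norms are maxima of finitely many linear forms (given by
  sign vectors), so the constraint set is a polyhedron and Farkas' lemma yields Lagrange multipliers
  for the first-order condition of the least-squares loss, with no constraint qualification.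
\<close>

lemma mem_convex_cone_hull_finite_image:
  fixes a :: "'i \<Rightarrow> 'a::real_vector"
  assumes "finite I" and "v \<in> convex_cone hull (a ` I)"
  shows "\<exists>\<mu>. (\<forall>i\<in>I. 0 \<le> \<mu> i) \<and> v = (\<Sum>i\<in>I. \<mu> i *\<^sub>R a i)"
proof -
  define K where "K = {v. \<exists>\<mu>. (\<forall>i\<in>I. 0 \<le> \<mu> i) \<and> v = (\<Sum>i\<in>I. \<mu> i *\<^sub>R a i)}"
  have "a ` I \<subseteq> K"
  proof
    fix v assume "v \<in> a ` I"
    then obtain j where "j \<in> I" "v = a j" by blast
    have "(\<Sum>i\<in>I. (if i = j then 1 else 0) *\<^sub>R a i) = (\<Sum>i\<in>I. if i = j then a i else 0)"
      by (rule sum.cong) auto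
    then have "v = (\<Sum>i\<in>I. (if i = j then 1 else 0) *\<^sub>R a i)"
      using \<open>finite I\<close> \<open>j \<in> I\<close> \<open>v = a j\<close> by (simp add: sum.delta')
    then show "v \<in> K" unfolding K_def by (intro CollectI exI[of _ "\<lambda>i. if i = j then 1 else 0"]) auto
  qed
  moreover have "convex_cone K"
    unfolding convex_cone_iff
  proof (intro conjI ballI allI impI)
    show "0 \<in> K" unfolding K_def by (intro CollectI exI[of _ "\<lambda>_. 0"]) auto
  next
    fix v w assume "v \<in> K" "w \<in> K"
    then obtain \<mu> \<nu> where "\<forall>i\<in>I. 0 \<le> \<mu> i" "\<forall>i\<in>I. 0 \<le> \<nu> i"
      "v = (\<Sum>i\<in>I. \<mu> i *\<^sub>R a i)" "w = (\<Sum>i\<in>I. \<nu> i *\<^sub>R a i)"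
      unfolding K_def by blast
    then show "v + w \<in> K" unfolding K_def
      by (intro CollectI exI[of _ "\<lambda>i. \<mu> i + \<nu> i"]) (auto simp: scaleR_add_left sum.distrib)
  next
    fix v and s :: real assume "v \<in> K" "0 \<le> s"
    then obtain \<mu> where "\<forall>i\<in>I. 0 \<le> \<mu> i" "v = (\<Sum>i\<in>I. \<mu> i *\<^sub>R a i)"
      unfolding K_def by blast
    then show "s *\<^sub>R v \<in> K" using \<open>0 \<le> s\<close> unfolding K_def
      by (intro CollectI exI[of _ "\<lambda>i. s * \<mu> i"]) (auto simp: scaleR_sum_right)
  qed
  ultimately have "convex_cone hull (a ` I) \<subseteq> K" by (rule hull_minimal)
  then show ?thesis using assms(2) unfolding K_def by blast
qed

lemma farkas_convex_cone_hull:
  fixes c :: "'a::euclidean_space"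
  assumes "finite A" and "\<And>d. (\<And>a. a \<in> A \<Longrightarrow> 0 \<le> a \<bullet> d) \<Longrightarrow> 0 \<le> c \<bullet> d"
  shows "c \<in> convex_cone hull A"
proof (rule ccontr)
  let ?K = "convex_cone hull A"
  assume "c \<notin> ?K"
  moreover have "convex ?K" and "closed ?K"
    using \<open>finite A\<close> by (simp_all add: convex_convex_cone_hull closed_convex_cone_hull)
  ultimately obtain w b where wc: "w \<bullet> c < b" and wK: "\<And>k. k \<in> ?K \<Longrightarrow> b < w \<bullet> k"
    by (metis separating_hyperplane_closed_point)
  have "b < 0" using wK[OF convex_cone_hull_contains_0] by simp
  have "0 \<le> a \<bullet> w" if "a \<in> A" for a
  proof (rule ccontr)
    assume "\<not> 0 \<le> a \<bullet> w"
    then have "(b / (w \<bullet> a)) *\<^sub>R a \<in> ?K"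
      using \<open>b < 0\<close> \<open>a \<in> A\<close>
      by (intro convex_cone_hull_mul hull_inc) (auto simp: inner_commute divide_nonpos_neg)
    from wK[OF this] show False using \<open>\<not> 0 \<le> a \<bullet> w\<close> by (simp add: inner_commute)
  qed
  then have "0 \<le> c \<bullet> w" by (rule assms(2))
  then show False using wc \<open>b < 0\<close> by (simp add: inner_commute)
qed

lemma polyhedron_feasible_direction:
  fixes a :: "'i \<Rightarrow> 'a::real_inner"
  assumes "finite I" and feas: "\<And>i. i \<in> I \<Longrightarrow> a i \<bullet> x \<le> \<beta> i"
    and dir: "\<And>i. i \<in> I \<Longrightarrow> a i \<bullet> x = \<beta> i \<Longrightarrow> a i \<bullet> d \<le> 0"
  shows "\<exists>t>0. \<forall>i\<in>I. a i \<bullet> (x + t *\<^sub>R d) \<le> \<beta> i"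
proof -
  have "\<forall>\<^sub>F t in at_right 0. a i \<bullet> (x + t *\<^sub>R d) \<le> \<beta> i" if "i \<in> I" for i
  proof (cases "a i \<bullet> x = \<beta> i")
    case True
    then show ?thesis using dir[OF that True]
      by (auto simp: inner_add_right mult_nonneg_nonpos intro: eventually_mono[OF eventually_at_right_less])
  next
    case False
    have "((\<lambda>t. a i \<bullet> (x + t *\<^sub>R d)) \<longlongrightarrow> a i \<bullet> (x + 0 *\<^sub>R d)) (at_right 0)"
      by (intro tendsto_intros)
    moreover have "a i \<bullet> x < \<beta> i" using feas[OF that] False by simp
    ultimately show ?thesis by (auto dest: order_tendstoD(2) elim!: eventually_mono)
  qed
  then have "\<forall>\<^sub>F t in at_right 0. \<forall>i\<in>I. a i \<bullet> (x + t *\<^sub>R d) \<le> \<beta> i"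
    using \<open>finite I\<close> by (simp add: eventually_ball_finite)
  then have "\<forall>\<^sub>F t in at_right 0. 0 < t \<and> (\<forall>i\<in>I. a i \<bullet> (x + t *\<^sub>R d) \<le> \<beta> i)"
    by (intro eventually_conj eventually_at_right_less)
  then show ?thesis using eventually_happens'[OF trivial_limit_at_right_real] by blast
qed

lemma linear_min_on_polyhedron_multipliers:
  fixes a :: "'i \<Rightarrow> 'a::euclidean_space"
  assumes "finite I" and feas: "\<And>i. i \<in> I \<Longrightarrow> a i \<bullet> x \<le> \<beta> i"
    and opt: "\<And>y. (\<And>i. i \<in> I \<Longrightarrow> a i \<bullet> y \<le> \<beta> i) \<Longrightarrow> c \<bullet> x \<le> c \<bullet> y"
  shows "\<exists>\<mu>. (\<forall>i\<in>I. 0 \<le> \<mu> i \<and> (\<mu> i \<noteq> 0 \<longrightarrow> a i \<bullet> x = \<beta> i)) \<and> -c = (\<Sum>i\<in>I. \<mu> i *\<^sub>R a i)"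
proof -
  define Act where "Act = {i \<in> I. a i \<bullet> x = \<beta> i}"
  have "finite Act" using \<open>finite I\<close> by (simp add: Act_def)
  have "-c \<in> convex_cone hull (a ` Act)"
  proof (rule farkas_convex_cone_hull)
    fix d assume d: "\<And>v. v \<in> a ` Act \<Longrightarrow> 0 \<le> v \<bullet> d"
    obtain t where "t > 0" and "\<forall>i\<in>I. a i \<bullet> (x + t *\<^sub>R (-d)) \<le> \<beta> i"
      using polyhedron_feasible_direction[OF \<open>finite I\<close> feas, where d = "-d"] d
      by (force simp: Act_def)
    then have "c \<bullet> x \<le> c \<bullet> (x + t *\<^sub>R (-d))" by (intro opt) auto
    then show "0 \<le> -c \<bullet> d" using \<open>t > 0\<close> by (simp add: inner_diff_right mult_le_0_iff)
  qed (use \<open>finite Act\<close> in simp)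
  then obtain \<mu> where \<mu>: "\<forall>i\<in>Act. 0 \<le> \<mu> i" and c: "-c = (\<Sum>i\<in>Act. \<mu> i *\<^sub>R a i)"
    using mem_convex_cone_hull_finite_image[OF \<open>finite Act\<close>] by blast
  define \<nu> where "\<nu> i = (if i \<in> Act then \<mu> i else 0)" for i
  have "(\<Sum>i\<in>Act. \<mu> i *\<^sub>R a i) = (\<Sum>i\<in>I. \<nu> i *\<^sub>R a i)"
    using \<open>finite I\<close> by (intro sum.mono_neutral_cong_left) (auto simp: Act_def \<nu>_def)
  then show ?thesis using \<mu> c by (intro exI[of _ \<nu>]) (auto simp: \<nu>_def Act_def)
qed

definition max_of_linear :: "('a::real_inner \<Rightarrow> real) \<Rightarrow> ('i \<Rightarrow> 'a) \<Rightarrow> bool" where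
  "max_of_linear g a \<longleftrightarrow> (\<forall>y i. a i \<bullet> y \<le> g y) \<and> (\<forall>y. \<exists>i. a i \<bullet> y = g y)"

lemma max_of_linear_le_iff:
  assumes "max_of_linear g a"
  shows "g y \<le> r \<longleftrightarrow> (\<forall>i. a i \<bullet> y \<le> r)"
proof -
  obtain j where "a j \<bullet> y = g y" using assms unfolding max_of_linear_def by blast
  then show ?thesis using assms unfolding max_of_linear_def by (metis order_trans)
qed

lemma inner_transpose_matrix_vector:
  fixes M :: "real^'n^'m"
  shows "(transpose M *v u) \<bullet> v = u \<bullet> (M *v v)"
  by (simp add: dot_lmul_matrix)

lemma max_of_linear_matrix:
  fixes M :: "real^'n^'m"
  assumes "max_of_linear g a"
  shows "max_of_linear (\<lambda>y. g (M *v y)) (\<lambda>i. transpose M *v a i)"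
  using assms unfolding max_of_linear_def
  by (simp add: inner_transpose_matrix_vector del: transpose_matrix_vector)

lemma max_of_linear_sum:
  assumes "\<And>j. max_of_linear (g j) (a j)"
  shows "max_of_linear (\<lambda>y. \<Sum>j\<in>J. g j y) (\<lambda>s. \<Sum>j\<in>J. a j (s j))"
  unfolding max_of_linear_def inner_sum_left
proof (intro conjI allI)
  fix y s show "(\<Sum>j\<in>J. a j (s j) \<bullet> y) \<le> (\<Sum>j\<in>J. g j y)"
    using assms by (intro sum_mono) (auto simp: max_of_linear_def)
next
  fix y
  have "\<forall>j. \<exists>i. a j i \<bullet> y = g j y" using assms by (simp add: max_of_linear_def)
  then obtain s where "\<And>j. a j (s j) \<bullet> y = g j y" by metis
  then show "\<exists>s. (\<Sum>j\<in>J. a j (s j) \<bullet> y) = (\<Sum>j\<in>J. g j y)" by (intro exI[of _ s]) simp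
qed

definition sign_vector :: "('k \<Rightarrow> bool) \<Rightarrow> real^'k" where
  "sign_vector s = (\<chi> j. if s j then 1 else -1)"

lemma max_of_linear_l1norm: "max_of_linear l1norm sign_vector"
  unfolding max_of_linear_def
proof (intro conjI allI)
  fix y :: "real^'k" and s
  show "sign_vector s \<bullet> y \<le> l1norm y"
    unfolding l1norm_def inner_vec_def sign_vector_def by (intro sum_mono) auto
  show "\<exists>s. sign_vector s \<bullet> y = l1norm y"
    unfolding l1norm_def inner_vec_def sign_vector_def
    by (intro exI[of _ "\<lambda>j. 0 \<le> y $ j"] sum.cong) auto
qed

lemma max_of_linear_TVnorm:
  "max_of_linear (TVnorm D) (\<lambda>s. \<Sum>i\<in>UNIV. transpose (D i) *v sign_vector (s i))"
proof -
  have "TVnorm D = (\<lambda>y. \<Sum>i\<in>UNIV. l1norm (D i *v y))" by (simp add: TVnorm_def fun_eq_iff)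
  then show ?thesis by (simp only:) (intro max_of_linear_sum max_of_linear_matrix max_of_linear_l1norm)
qed

lemma linear_min_under_max_of_linear_constraints:
  fixes p :: "'i::finite \<Rightarrow> 'a::euclidean_space" and q :: "'j::finite \<Rightarrow> 'a"
  assumes f: "max_of_linear f p" and g: "max_of_linear g q"
    and feas: "f x \<le> r" "g x \<le> s"
    and opt: "\<And>y. f y \<le> r \<Longrightarrow> g y \<le> s \<Longrightarrow> c \<bullet> x \<le> c \<bullet> y"
  shows "\<exists>l m. 0 \<le> l \<and> 0 \<le> m \<and>
           (\<forall>y. c \<bullet> x + l * f x + m * g x \<le> c \<bullet> y + l * f y + m * g y)"
proof -
  \<comment> \<open>Both sublevel sets together form one polyhedron; \<open>l\<close> and \<open>m\<close> collect the LP multipliers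
      of its two blocks of rows, and complementary slackness lets \<open>f\<close>, \<open>g\<close> replace the active rows.\<close>
  define a where "a = case_sum p q"
  define \<beta> :: "'i + 'j \<Rightarrow> real" where "\<beta> = case_sum (\<lambda>_. r) (\<lambda>_. s)"
  have polyhedron: "(\<forall>i. a i \<bullet> y \<le> \<beta> i) \<longleftrightarrow> f y \<le> r \<and> g y \<le> s" for y
    using max_of_linear_le_iff[OF f] max_of_linear_le_iff[OF g]
    by (auto simp: a_def \<beta>_def split: sum.split)
  have "\<exists>\<mu>. (\<forall>i\<in>UNIV. 0 \<le> \<mu> i \<and> (\<mu> i \<noteq> 0 \<longrightarrow> a i \<bullet> x = \<beta> i)) \<and> -c = (\<Sum>i\<in>UNIV. \<mu> i *\<^sub>R a i)"
    by (rule linear_min_on_polyhedron_multipliers) (use polyhedron feas opt in auto)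
  then obtain \<mu> where \<mu>: "\<And>i. 0 \<le> \<mu> i" and active: "\<And>i. \<mu> i \<noteq> 0 \<Longrightarrow> a i \<bullet> x = \<beta> i"
    and c: "-c = (\<Sum>i\<in>UNIV. \<mu> i *\<^sub>R a i)"
    by blast
  define l where "l = (\<Sum>i\<in>UNIV. \<mu> (Inl i))"
  define m where "m = (\<Sum>j\<in>UNIV. \<mu> (Inr j))"
  show ?thesis
  proof (intro exI conjI allI)
    show "0 \<le> l" "0 \<le> m" using \<mu> by (simp_all add: l_def m_def sum_nonneg)
  next
    fix y
    define \<delta> :: "'i + 'j \<Rightarrow> real" where "\<delta> = case_sum (\<lambda>_. f x - f y) (\<lambda>_. g x - g y)"
    have slack: "\<mu> i * \<delta> i \<le> \<mu> i * (a i \<bullet> x - a i \<bullet> y)" for i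
    proof (cases "\<mu> i = 0")
      case False
      then have "\<delta> i \<le> a i \<bullet> x - a i \<bullet> y"
        using active[OF False] feas f g
        by (cases i) (auto simp: a_def \<beta>_def \<delta>_def max_of_linear_def intro: diff_mono)
      then show ?thesis using \<mu> by (intro mult_left_mono)
    qed simp
    have "l * (f x - f y) + m * (g x - g y) = (\<Sum>i\<in>UNIV. \<mu> i * \<delta> i)"
      by (simp add: UNIV_Plus_UNIV[symmetric] sum.Plus \<delta>_def l_def m_def sum_distrib_right
          del: UNIV_Plus_UNIV)
    also have "\<dots> \<le> (\<Sum>i\<in>UNIV. \<mu> i * (a i \<bullet> x - a i \<bullet> y))"
      using slack by (intro sum_mono)
    also have "\<dots> = (-c) \<bullet> x - (-c) \<bullet> y"
      unfolding c by (simp add: inner_sum_left right_diff_distrib sum_subtractf)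
    finally show "c \<bullet> x + l * f x + m * g x \<le> c \<bullet> y + l * f y + m * g y"
      by (simp add: algebra_simps)
  qed
qed

lemma convex_max_of_linear_sublevel:
  assumes "max_of_linear g a"
  shows "convex {y. g y \<le> r}"
proof -
  have "{y. g y \<le> r} = (\<Inter>i. {y. a i \<bullet> y \<le> r})"
    using max_of_linear_le_iff[OF assms] by auto
  then show ?thesis by (simp add: convex_INT convex_halfspace_le)
qed

lemma lossTr_add_scaleR:
  "lossTr Phi b (x + t *\<^sub>R v) =
     lossTr Phi b x + t * ((transpose Phi *v (Phi *v x - b)) \<bullet> v) + t\<^sup>2 / 2 * (norm (Phi *v v))\<^sup>2"
proof -
  have residual: "Phi *v (x + t *\<^sub>R v) - b = (Phi *v x - b) + t *\<^sub>R (Phi *v v)"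
    by (simp add: matrix_vector_right_distrib matrix_vector_mult_scaleR)
  have expand: "(norm (w + t *\<^sub>R z))\<^sup>2 = (norm w)\<^sup>2 + 2 * t * (w \<bullet> z) + t\<^sup>2 * (norm z)\<^sup>2"
    for w z :: "real^'m"
    using dot_norm[of w "t *\<^sub>R z"] by (simp add: power_mult_distrib)
  show ?thesis
    unfolding lossTr_def inner_transpose_matrix_vector residual expand by (simp add: algebra_simps)
qed

lemma lossTr_gradient_in_subdiff:
  "transpose Phi *v (Phi *v x - b) \<in> subdiff (lossTr Phi b) x"
proof -
  have "lossTr Phi b x + (transpose Phi *v (Phi *v x - b)) \<bullet> (y - x) \<le> lossTr Phi b y" for y
    using lossTr_add_scaleR[of Phi b x 1 "y - x"] by simp
  then show ?thesis by (simp add: subdiff_def)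
qed

lemma lossTr_min_on_convex_first_order:
  assumes "convex C" and "x \<in> C" and min: "\<And>z. z \<in> C \<Longrightarrow> lossTr Phi b x \<le> lossTr Phi b z"
    and "y \<in> C"
  shows "(transpose Phi *v (Phi *v x - b)) \<bullet> x \<le> (transpose Phi *v (Phi *v x - b)) \<bullet> y"
proof -
  define c where "c = transpose Phi *v (Phi *v x - b)"
  define q where "q = (norm (Phi *v (y - x)))\<^sup>2"
  have "0 \<le> c \<bullet> (y - x) + t / 2 * q" if "0 < t" "t < 1" for t
  proof -
    have "x + t *\<^sub>R (y - x) \<in> C"
      using convexD_alt[OF \<open>convex C\<close> \<open>x \<in> C\<close> \<open>y \<in> C\<close>, of t] that
      by (simp add: algebra_simps)
    from min[OF this] have "0 \<le> t * (c \<bullet> (y - x) + t / 2 * q)"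
      unfolding lossTr_add_scaleR c_def q_def by (simp add: power2_eq_square algebra_simps)
    then show ?thesis using \<open>0 < t\<close> by (simp add: zero_le_mult_iff)
  qed
  then have "\<forall>\<^sub>F t in at_right 0. 0 \<le> c \<bullet> (y - x) + t / 2 * q"
    by (auto simp: eventually_at_right_field intro: exI[of _ 1])
  moreover have "((\<lambda>t. c \<bullet> (y - x) + t / 2 * q) \<longlongrightarrow> c \<bullet> (y - x)) (at_right 0)"
    by (auto intro!: tendsto_eq_intros)
  ultimately have "0 \<le> c \<bullet> (y - x)"
    by (intro tendsto_lowerbound[of "\<lambda>t. c \<bullet> (y - x) + t / 2 * q"]) auto
  then show ?thesis by (simp add: c_def inner_diff_right)
qed

lemma subdiff_add:
  assumes "g \<in> subdiff f x" and "h \<in> subdiff k x"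
  shows "g + h \<in> subdiff (\<lambda>y. f y + k y) x"
proof -
  have "f x + k x + (g + h) \<bullet> (z - x) \<le> f z + k z" for z
    using assms unfolding subdiff_def by (auto simp: inner_add_left elim!: allE[of _ z])
  then show ?thesis by (simp add: subdiff_def)
qed

lemma subdiff_scale:
  assumes "0 \<le> c" and "g \<in> subdiff f x"
  shows "c *\<^sub>R g \<in> subdiff (\<lambda>y. c * f y) x"
proof -
  have "c * (f x + g \<bullet> (z - x)) \<le> c * f z" for z
    using assms unfolding subdiff_def by (auto intro: mult_left_mono)
  then show ?thesis by (simp add: subdiff_def distrib_left)
qed

lemma subdiff_sum:
  "(\<And>i. i \<in> I \<Longrightarrow> g i \<in> subdiff (f i) x) \<Longrightarrow>
     (\<Sum>i\<in>I. g i) \<in> subdiff (\<lambda>y. \<Sum>i\<in>I. f i y) x"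
  unfolding subdiff_def by (auto simp: inner_sum_left sum.distrib[symmetric] intro: sum_mono)

lemma subdiff_matrix:
  fixes M :: "real^'n^'m"
  assumes "g \<in> subdiff f (M *v x)"
  shows "transpose M *v g \<in> subdiff (\<lambda>y. f (M *v y)) x"
proof -
  have "f (M *v x) + g \<bullet> (M *v z - M *v x) \<le> f (M *v z)" for z
    using assms unfolding subdiff_def by blast
  then show ?thesis
    by (simp add: subdiff_def inner_transpose_matrix_vector matrix_vector_mult_diff_distrib
        del: transpose_matrix_vector)
qed

lemma Mset_imp_Sp:
  assumes "(x, xi) \<in> Mset Psi D Phi b r"
  shows "xi \<in> R2plus \<and> x \<in> Sp Psi D Phi b xi"
proof -
  obtain g1 g2 where xi: "xi \<in> R2plus" and g1: "g1 \<in> subdiff l1norm (Psi *v x)"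
    and g2: "\<And>i. g2 i \<in> subdiff l1norm (D i *v x)"
    and stationary: "0 = transpose Phi *v (Phi *v x - b) + fst xi *\<^sub>R (transpose Psi *v g1)
                         + snd xi *\<^sub>R (\<Sum>i\<in>UNIV. transpose (D i) *v g2 i)"
    using assms unfolding Mset_def by blast
  have "transpose Phi *v (Phi *v x - b) + fst xi *\<^sub>R (transpose Psi *v g1)
          + snd xi *\<^sub>R (\<Sum>i\<in>UNIV. transpose (D i) *v g2 i)
        \<in> subdiff (\<lambda>y. lossTr Phi b y + fst xi * l1norm (Psi *v y)
                        + snd xi * (\<Sum>i\<in>UNIV. l1norm (D i *v y))) x"
    using xi g1 g2 unfolding R2plus_def
    by (intro subdiff_add subdiff_scale subdiff_sum subdiff_matrix lossTr_gradient_in_subdiff) auto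
  from this[folded stationary]
  have "0 \<in> subdiff (\<lambda>y. lossTr Phi b y + fst xi * l1norm (Psi *v y) + snd xi * TVnorm D y) x"
    unfolding TVnorm_def .
  then show ?thesis using xi by (simp add: Sp_def subdiff_def)
qed

lemma Sp_imp_Sc_Qmap:
  assumes "lam \<in> R2plus" and "x \<in> Sp Psi D Phi b lam"
  shows "x \<in> Sc Psi D Phi b (Qmap Psi D x)"
  unfolding Sc_def Qmap_def
proof (clarsimp)
  fix y assume y1: "l1norm (Psi *v y) \<le> l1norm (Psi *v x)" and y2: "TVnorm D y \<le> TVnorm D x"
  have "lossTr Phi b x + fst lam * l1norm (Psi *v x) + snd lam * TVnorm D x
        \<le> lossTr Phi b y + fst lam * l1norm (Psi *v y) + snd lam * TVnorm D y"
    using assms(2) unfolding Sp_def by blast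
  moreover have "fst lam * l1norm (Psi *v y) \<le> fst lam * l1norm (Psi *v x)"
    using assms(1) y1 by (intro mult_left_mono) (auto simp: R2plus_def)
  moreover have "snd lam * TVnorm D y \<le> snd lam * TVnorm D x"
    using assms(1) y2 by (intro mult_left_mono) (auto simp: R2plus_def)
  ultimately show "lossTr Phi b x \<le> lossTr Phi b y" by linarith
qed

lemma Sc_imp_Sp:
  fixes Psi :: "real^'n^'d" and D :: "'n \<Rightarrow> real^'n^'k"
  assumes "x \<in> Sc Psi D Phi b r"
  shows "\<exists>lam\<in>R2plus. x \<in> Sp Psi D Phi b lam"
proof -
  define c where "c = transpose Phi *v (Phi *v x - b)"
  define C where "C = {y. l1norm (Psi *v y) \<le> fst r} \<inter> {y. TVnorm D y \<le> snd r}"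
  have l1: "max_of_linear (\<lambda>y. l1norm (Psi *v y)) (\<lambda>s. transpose Psi *v sign_vector s)"
    by (intro max_of_linear_matrix max_of_linear_l1norm)
  have "convex C"
    unfolding C_def
    by (intro convex_Int convex_max_of_linear_sublevel[OF l1]
        convex_max_of_linear_sublevel[OF max_of_linear_TVnorm])
  moreover have "x \<in> C" and "\<And>z. z \<in> C \<Longrightarrow> lossTr Phi b x \<le> lossTr Phi b z"
    using assms by (auto simp: C_def Sc_def)
  ultimately have "c \<bullet> x \<le> c \<bullet> y" if "y \<in> C" for y
    unfolding c_def using that by (rule lossTr_min_on_convex_first_order)
  then have "\<exists>l m. 0 \<le> l \<and> 0 \<le> m \<and>
      (\<forall>y. c \<bullet> x + l * l1norm (Psi *v x) + m * TVnorm D x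
           \<le> c \<bullet> y + l * l1norm (Psi *v y) + m * TVnorm D y)"
    using \<open>x \<in> C\<close> unfolding C_def
    by (intro linear_min_under_max_of_linear_constraints[OF l1 max_of_linear_TVnorm]) auto
  then obtain l1 l2 where "0 \<le> l1" "0 \<le> l2"
    and penalized: "\<And>y. c \<bullet> x + l1 * l1norm (Psi *v x) + l2 * TVnorm D x
                      \<le> c \<bullet> y + l1 * l1norm (Psi *v y) + l2 * TVnorm D y"
    by blast
  have "x \<in> Sp Psi D Phi b (l1, l2)"
  proof -
    have gradient: "lossTr Phi b x + (c \<bullet> y - c \<bullet> x) \<le> lossTr Phi b y" for y
      using lossTr_gradient_in_subdiff[of Phi x b] by (simp add: subdiff_def c_def inner_diff_right)
    have "lossTr Phi b x + l1 * l1norm (Psi *v x) + l2 * TVnorm D x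
          \<le> lossTr Phi b y + l1 * l1norm (Psi *v y) + l2 * TVnorm D y" for y
      using gradient[of y] penalized[of y] by linarith
    then show ?thesis by (simp add: Sp_def)
  qed
  then show ?thesis using \<open>0 \<le> l1\<close> \<open>0 \<le> l2\<close> by (auto simp: R2plus_def)
qed

lemma Qmap_in_R2plus: "Qmap Psi D x \<in> R2plus"
  by (simp add: Qmap_def R2plus_def l1norm_def TVnorm_def sum_nonneg)

theorem mainTheorem3:
  fixes Psi :: "real^'n^'d" and D :: "'n \<Rightarrow> real^'n^'k"
    and Phitr :: "real^'n^'m1" and btr :: "real^'m1"
    and Phival :: "real^'n^'m2" and bval :: "real^'m2"
  shows "(\<forall>xb rb xib.
            globalOptP2 Psi D Phitr btr Phival bval xb rb \<and>
            (xb, xib) \<in> Mset Psi D Phitr btr rb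
            \<longrightarrow> globalOptP1 Psi D Phitr btr Phival bval xb xib)
       \<and> ((\<exists>DD :: ((real^'n) \<times> (real \<times> real)) set.
              DD \<subseteq> UNIV \<times> R2plus \<and> UNIV \<times> R2plus \<subseteq> closure DD \<and>
              (\<forall>x r. (x, r) \<in> DD \<longrightarrow> Mset Psi D Phitr btr r \<noteq> {}))
          \<longrightarrow> (\<forall>xb lb. globalOptP1 Psi D Phitr btr Phival bval xb lb
                 \<longrightarrow> globalOptP2 Psi D Phitr btr Phival bval xb (Qmap Psi D xb)))"
proof (intro conjI allI impI)
  fix xb rb xib
  assume "globalOptP2 Psi D Phitr btr Phival bval xb rb \<and> (xb, xib) \<in> Mset Psi D Phitr btr rb"
  then have P2_opt: "\<And>x r. r \<in> R2plus \<Longrightarrow> x \<in> Sc Psi D Phitr btr r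
                      \<Longrightarrow> Fval Phival bval xb \<le> Fval Phival bval x"
    and KKT: "(xb, xib) \<in> Mset Psi D Phitr btr rb"
    unfolding globalOptP2_def by blast+
  have "Fval Phival bval xb \<le> Fval Phival bval x"
    if "lam \<in> R2plus" and "x \<in> Sp Psi D Phitr btr lam" for x lam
    using P2_opt[OF Qmap_in_R2plus Sp_imp_Sc_Qmap[OF that]] .
  with Mset_imp_Sp[OF KKT] show "globalOptP1 Psi D Phitr btr Phival bval xb xib"
    unfolding globalOptP1_def by blast
next
  fix xb lb
  assume "globalOptP1 Psi D Phitr btr Phival bval xb lb"
  then have P1_opt: "\<And>x lam. lam \<in> R2plus \<Longrightarrow> x \<in> Sp Psi D Phitr btr lam
                       \<Longrightarrow> Fval Phival bval xb \<le> Fval Phival bval x"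
    and "lb \<in> R2plus" and "xb \<in> Sp Psi D Phitr btr lb"
    unfolding globalOptP1_def by blast+
  have "Fval Phival bval xb \<le> Fval Phival bval x" if "x \<in> Sc Psi D Phitr btr r" for x r
    using Sc_imp_Sp[OF that] P1_opt by blast
  with Qmap_in_R2plus Sp_imp_Sc_Qmap[OF \<open>lb \<in> R2plus\<close> \<open>xb \<in> Sp Psi D Phitr btr lb\<close>]
  show "globalOptP2 Psi D Phitr btr Phival bval xb (Qmap Psi D xb)"
    unfolding globalOptP2_def by blast
qed

end
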